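(* Let $A\in\mathbb{R}^{n\times n}$, $B\in\mathbb{R}^{n\times m}$, $Q\succeq0$, $R\succ0$, with $(A,B)$ stabilizable and $Q=C^TC$ with $(A,C)$ detectable, and let $\Lambda=\mathrm{diag}(Q,R)$. Let $S,H$ be off-policy data matrices with $S\succ0$ (see context). Define $P_0=0$ and, for $k\ge0$, let $P_{k+1}\in\mathbb{S}^{n+m}$ solve $$SP_{k+1}S=S\Lambda S+H\big(P_{k,11}-P_{k,12}P_{k,22}^{-1}P_{k,12}^T\big)H^T,$$ where the Schur-complement term is taken to be $0$ when $k=0$ (so $P_1=\Lambda$). Then $P_k\to P^*$ as $k\to\infty$, where $$P^*=\begin{bmatrix}Q+A^TX^*A & A^TX^*B\\ B^TX^*A & R+B^TX^*B\end{bmatrix}$$ and $X^*$ is the unique positive semidefinite solution of $X=A^TXA-A^TXB(R+B^TXB)^{-1}B^TXA+Q$.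
   Context: Off-policy data: along one trajectory of $x(k+1)=Ax(k)+Bu(k)$ from $x(0)=z$ with arbitrary inputs $u(0),\dots,u(N-1)$, $S=\frac1N\sum_{k=0}^{N-1}[x(k);u(k)][x(k);u(k)]^T$ and $H=\frac1N\sum_{k=0}^{N-1}[x(k);u(k)]x(k+1)^T$. For $P\in\mathbb{S}^{n+m}$, $P_{11}\in\mathbb{R}^{n\times n}$, $P_{12}\in\mathbb{R}^{n\times m}$, $P_{22}\in\mathbb{R}^{m\times m}$ denote the blocks of $P=\begin{bmatrix}P_{11}&P_{12}\\P_{12}^T&P_{22}\end{bmatrix}$. *)

theory Defs
  imports "HOL-Analysis.Analysis"
begin

definition psd :: "real^'n^'n \<Rightarrow> bool" where
  "psd M \<longleftrightarrow> transpose M = M \<and> (\<forall>x. 0 \<le> x \<bullet> (M *v x))"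

definition pd :: "real^'n^'n \<Rightarrow> bool" where
  "pd M \<longleftrightarrow> transpose M = M \<and> (\<forall>x. x \<noteq> 0 \<longrightarrow> 0 < x \<bullet> (M *v x))"

definition schur_stable :: "real^'n^'n \<Rightarrow> bool" where
  "schur_stable M \<longleftrightarrow>
     (\<forall>(l::complex) (v::complex^'n). v \<noteq> 0 \<and> (map_matrix complex_of_real M) *v v = l *s v
        \<longrightarrow> cmod l < 1)"

definition stabilizable :: "real^'n^'n \<Rightarrow> real^'m^'n \<Rightarrow> bool" where
  "stabilizable A B \<longleftrightarrow> (\<exists>K::real^'n^'m. schur_stable (A + B ** K))"

definition detectable :: "real^'n^'n \<Rightarrow> real^'n^'p \<Rightarrow> bool" where
  "detectable A C \<longleftrightarrow> (\<exists>L::real^'p^'n. schur_stable (A + L ** C))"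

definition blockmat :: "real^'n::finite^'n \<Rightarrow> real^'m::finite^'n \<Rightarrow> real^'n^'m \<Rightarrow> real^'m^'m
    \<Rightarrow> real^('n + 'm)^('n + 'm)" where
  "blockmat M11 M12 M21 M22 = (\<chi> i j. case i of
       Inl a \<Rightarrow> (case j of Inl b \<Rightarrow> M11 $ a $ b | Inr b \<Rightarrow> M12 $ a $ b)
     | Inr a \<Rightarrow> (case j of Inl b \<Rightarrow> M21 $ a $ b | Inr b \<Rightarrow> M22 $ a $ b))"

definition blk11 :: "real^('n::finite + 'm::finite)^('n + 'm) \<Rightarrow> real^'n^'n" where
  "blk11 P = (\<chi> a b. P $ Inl a $ Inl b)"
definition blk12 :: "real^('n::finite + 'm::finite)^('n + 'm) \<Rightarrow> real^'m^'n" where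
  "blk12 P = (\<chi> a b. P $ Inl a $ Inr b)"
definition blk22 :: "real^('n::finite + 'm::finite)^('n + 'm) \<Rightarrow> real^'m^'m" where
  "blk22 P = (\<chi> a b. P $ Inr a $ Inr b)"

definition stackv :: "real^'n::finite \<Rightarrow> real^'m::finite \<Rightarrow> real^('n + 'm)" where
  "stackv x u = (\<chi> i. case i of Inl a \<Rightarrow> x $ a | Inr b \<Rightarrow> u $ b)"

definition outer :: "real^'a \<Rightarrow> real^'b \<Rightarrow> real^'b^'a" where
  "outer v w = (\<chi> i j. v $ i * w $ j)"

end

theory Submission
  imports Defs "HOL-Computational_Algebra.Fundamental_Theorem_Algebra"
begin

text \<open>Since \<open>x(k+1) = [A B] [x(k); u(k)]\<close>, the data satisfy \<open>H = S [A B]\<^sup>T\<close>, and cancelling the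
  invertible \<open>S\<close> turns the recursion into \<open>P\<^sub>k\<^sub>+\<^sub>1 = \<Phi>(X\<^sub>k)\<close> with
  \<open>\<Phi>(X) = diag(Q, R) + [A B]\<^sup>T X [A B]\<close>, where \<open>X\<^sub>0 = 0\<close> and \<open>X\<^sub>k\<^sub>+\<^sub>1 = Ric(X\<^sub>k)\<close>: the Schur
  complement of \<open>\<Phi>(X)\<close> is the Riccati operator \<open>Ric(X)\<close>. So \<open>P\<^sub>k\<close> is value iteration in disguise.
  Completing the square shows that \<open>x\<^sup>T Ric(X) x\<close> is the minimum over \<open>u\<close> of the one-step cost
  \<open>x\<^sup>T Q x + u\<^sup>T R u + (Ax + Bu)\<^sup>T X (Ax + Bu)\<close>. Hence \<open>Ric\<close> is monotone, \<open>X\<^sub>k\<close> increases, and the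
  cost of a stabilizing feedback bounds it, so \<open>X\<^sub>k\<close> converges to a positive semidefinite fixed
  point \<open>X\<^sup>*\<close>. Value iteration stays below every positive semidefinite fixed point \<open>Y\<close>; conversely,
  along the closed loop \<open>A + B K(X\<^sup>*)\<close> the stage costs are summable, so detectability makes this loop
  stable, and \<open>x\<^sup>T (Y - X\<^sup>*) x\<close>, which does not decrease along it, must be \<open>\<le> 0\<close>. Thus \<open>Y = X\<^sup>*\<close>,
  and continuity of \<open>\<Phi>\<close> gives \<open>P\<^sub>k \<rightarrow> \<Phi>(X\<^sup>*)\<close>.\<close>

section \<open>Decay of orbits of Schur stable matrices\<close>

definition orbit :: "'a::semiring_1^'n^'n \<Rightarrow> nat \<Rightarrow> 'a^'n \<Rightarrow> 'a^'n" where
  "orbit M t = ((*v) M) ^^ t"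

lemma orbit_0 [simp]: "orbit M 0 x = x"
  by (simp add: orbit_def)

lemma orbit_Suc: "orbit M (Suc t) x = M *v orbit M t x"
  by (simp add: orbit_def)

lemma orbit_Suc_right: "orbit M (Suc t) x = orbit M t (M *v x)"
  by (simp only: orbit_def funpow_Suc_right comp_def)

lemma orbit_add: "orbit M t (x + y) = orbit M t x + orbit M t y"
  by (induct t) (simp_all add: orbit_Suc matrix_vector_right_distrib)

lemma orbit_zero [simp]: "orbit M t 0 = 0"
  by (induct t) (simp_all add: orbit_Suc)

lemma orbit_scalar: "orbit (M::'a::field^'n^'n) t (c *s x) = c *s orbit M t x"
  by (induct t) (simp_all add: orbit_Suc vector_scalar_commute)

lemma orbit_sum: "orbit M t (\<Sum>i\<in>I. f i) = (\<Sum>i\<in>I. orbit M t (f i))"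
  by (induct I rule: infinite_finite_induct) (simp_all add: orbit_add)

lemma tendsto_zero_if_contracting:
  fixes s e :: "nat \<Rightarrow> real"
  assumes s_nonneg: "\<And>t. 0 \<le> s t" and "0 \<le> \<rho>" "\<rho> < 1"
    and step: "\<And>t. s (Suc t) \<le> \<rho> * s t + e t" and e: "e \<longlonglongrightarrow> 0"
  shows "s \<longlonglongrightarrow> 0"
proof (rule LIMSEQ_I)
  fix \<epsilon> :: real assume "0 < \<epsilon>"
  then have "0 < \<epsilon> * (1 - \<rho>) / 2" using \<open>\<rho> < 1\<close> by simp
  from LIMSEQ_D[OF e this] obtain T where T: "\<And>t. t \<ge> T \<Longrightarrow> norm (e t) < \<epsilon> * (1 - \<rho>) / 2"
    by auto
  have bound: "s (T + k) \<le> \<rho> ^ k * s T + \<epsilon> / 2" for k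
  proof (induct k)
    case 0 then show ?case using \<open>0 < \<epsilon>\<close> by simp
  next
    case (Suc k)
    have "s (T + Suc k) \<le> \<rho> * s (T + k) + \<epsilon> * (1 - \<rho>) / 2"
      using step[of "T + k"] T[of "T + k"] by simp
    also have "\<dots> \<le> \<rho> * (\<rho> ^ k * s T + \<epsilon> / 2) + \<epsilon> * (1 - \<rho>) / 2"
      using Suc \<open>0 \<le> \<rho>\<close> by (simp add: mult_left_mono)
    also have "\<dots> = \<rho> ^ Suc k * s T + \<epsilon> / 2" by (simp add: field_simps)
    finally show ?case .
  qed
  have "(\<lambda>k. \<rho> ^ k * s T) \<longlonglongrightarrow> 0"
    using assms(2,3) by (intro tendsto_mult_left_zero LIMSEQ_power_zero) auto
  from LIMSEQ_D[OF this half_gt_zero[OF \<open>0 < \<epsilon>\<close>]] obtain K where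
    K: "\<And>k. k \<ge> K \<Longrightarrow> \<rho> ^ k * s T < \<epsilon> / 2" by (force simp del: norm_mult)
  have "norm (s n) < \<epsilon>" if "n \<ge> T + K" for n
  proof -
    have "s n \<le> \<rho> ^ (n - T) * s T + \<epsilon> / 2" using bound[of "n - T"] that by simp
    also have "\<dots> < \<epsilon>" using K[of "n - T"] that by (simp add: le_diff_conv2)
    finally show ?thesis using s_nonneg[of n] by simp
  qed
  then show "\<exists>n0. \<forall>n\<ge>n0. norm (s n - 0) < \<epsilon>" by auto
qed

text \<open>\<open>poly_mv M p v\<close> is \<open>p(M) v\<close>, evaluated by Horner's rule.\<close>

definition poly_mv :: "'a::field^'n^'n \<Rightarrow> 'a poly \<Rightarrow> 'a^'n \<Rightarrow> 'a^'n" where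
  "poly_mv M p = fold_coeffs (\<lambda>a f v. a *s v + M *v f v) p (\<lambda>v. 0)"

lemma poly_mv_0 [simp]: "poly_mv M 0 v = 0"
  by (simp add: poly_mv_def)

lemma poly_mv_pCons [simp]: "poly_mv M (pCons a p) v = a *s v + M *v poly_mv M p v"
  by (cases "p = 0"; cases "a = 0") (simp_all add: poly_mv_def)

lemma poly_mv_add: "poly_mv M (p + q) v = poly_mv M p v + poly_mv M q v"
proof (induction p arbitrary: q)
  case (pCons a p)
  then show ?case
    by (cases q) (simp add: vector_sadd_rdistrib matrix_vector_right_distrib algebra_simps)
qed simp

lemma poly_mv_smult: "poly_mv M (smult c p) v = c *s poly_mv M p v"
  by (induct p) (simp_all add: vector_add_ldistrib vector_smult_assoc vector_scalar_commute)

lemma poly_mv_mult: "poly_mv M (p * q) v = poly_mv M p (poly_mv M q v)"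
  by (induct p) (simp_all add: poly_mv_add poly_mv_smult)

lemma poly_mv_monom: "poly_mv M (monom c i) v = c *s orbit M i v"
  by (induct i) (simp_all add: monom_0 monom_Suc orbit_Suc vector_scalar_commute)

lemma poly_mv_sum: "poly_mv M (\<Sum>i\<in>I. f i) v = (\<Sum>i\<in>I. poly_mv M (f i) v)"
  by (induct I rule: infinite_finite_induct) (simp_all add: poly_mv_add)

lemma poly_mv_linear: "poly_mv M [:-z, 1:] v = M *v v - z *s v"
  by (simp add: vector_smult_lneg)

lemma norm_vector_scalar_mult: "norm ((c::'a::real_normed_field) *s (x::'a^'n)) = norm c * norm x"
proof -
  have "norm (c *s x) = L2_set (\<lambda>i. norm c * norm (x $ i)) UNIV"
    unfolding norm_vec_def by (simp only: vector_smult_component norm_mult)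
  also have "\<dots> = norm c * norm x"
    unfolding norm_vec_def by (rule L2_set_right_distrib[symmetric]) simp
  finally show ?thesis .
qed

lemma exists_annihilating_poly:
  fixes M :: "'a::field^'n^'n"
  obtains p where "p \<noteq> 0" "poly_mv M p v = 0"
proof (cases "inj_on (\<lambda>i. orbit M i v) {..CARD('n)}")
  case True
  let ?S = "(\<lambda>i. orbit M i v) ` {..CARD('n)}"
  have "vec.dim ?S \<le> CARD('n)"
    by (metis subset_UNIV vec.dim_subset vec_dim_card)
  also have "\<dots> < card ?S" using True by (simp add: card_image)
  finally have "vec.dependent ?S" by (intro vec.dependent_biggerset_general)
  then obtain c where c: "\<exists>w\<in>?S. c w \<noteq> 0" "(\<Sum>w\<in>?S. c w *s w) = 0"
    using vec.dependent_finite[of ?S] by auto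
  define p where "p = (\<Sum>i\<le>CARD('n). monom (c (orbit M i v)) i)"
  have "poly_mv M p v = (\<Sum>w\<in>?S. c w *s w)"
    by (simp add: p_def poly_mv_sum poly_mv_monom sum.reindex[OF True])
  then have "poly_mv M p v = 0" using c(2) by simp
  moreover from c(1) obtain i where "i \<le> CARD('n)" "c (orbit M i v) \<noteq> 0" by auto
  then have "coeff p i \<noteq> 0" by (simp add: p_def coeff_sum_monom)
  then have "p \<noteq> 0" by auto
  ultimately show ?thesis using that by blast
next
  case False
  then obtain i j where "i \<noteq> j" "orbit M i v = orbit M j v" unfolding inj_on_def by auto
  moreover define p where "p = monom (1::'a) j + monom (-1) i"
  ultimately have "coeff p j \<noteq> 0" "poly_mv M p v = 0"
    by (simp_all add: p_def poly_mv_add poly_mv_monom vector_smult_lneg)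
  then have "p \<noteq> 0" "poly_mv M p v = 0" by auto
  then show ?thesis by (rule that)
qed

text \<open>If \<open>p(M) v = 0\<close>, split off a root \<open>z\<close> of \<open>p = (X - z) q\<close>: either \<open>q(M) v = 0\<close>, or
  \<open>q(M) v\<close> is an eigenvector for \<open>z\<close>, so \<open>|z| < 1\<close>, and \<open>M\<^sup>t v\<close> obeys
  \<open>M\<^sup>t\<^sup>+\<^sup>1 v = z M\<^sup>t v + M\<^sup>t (M - z) v\<close>, where \<open>q\<close> annihilates \<open>(M - z) v\<close>.\<close>

lemma orbit_tendsto_zero_if_annihilated:
  fixes M :: "complex^'n^'n"
  assumes eig: "\<And>l w. w \<noteq> 0 \<Longrightarrow> M *v w = l *s w \<Longrightarrow> cmod l < 1"
  shows "p \<noteq> 0 \<Longrightarrow> poly_mv M p v = 0 \<Longrightarrow> (\<lambda>t. orbit M t v) \<longlonglongrightarrow> 0"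
proof (induct "degree p" arbitrary: p v rule: less_induct)
  case less
  show ?case
  proof (cases "degree p = 0")
    case True
    then have p: "p = [:coeff p 0:]" by (metis degree_0_id)
    have "coeff p 0 *s v = 0" using less.prems(2) by (subst (asm) p) simp
    moreover have "coeff p 0 \<noteq> 0" using less.prems(1) by (metis p pCons_0_0)
    ultimately have "v = 0" by simp
    then show ?thesis by simp
  next
    case False
    then have "\<not> constant (poly p)" by (simp add: constant_degree)
    then obtain z where "poly p z = 0" using fundamental_theorem_of_algebra by blast
    then obtain q where pq: "p = [:-z, 1:] * q" by (metis dvdE poly_eq_0_iff_dvd)
    have "q \<noteq> 0" using less.prems pq by auto
    then have deg: "degree q < degree p" using pq by (simp add: degree_mult_eq del: mult_pCons_left)
    define w where "w = M *v v - z *s v"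
    have "poly_mv M q w = poly_mv M p v"
      unfolding pq w_def by (simp only: mult.commute[of "[:-z, 1:]" q] poly_mv_mult poly_mv_linear)
    then have w: "(\<lambda>t. orbit M t w) \<longlonglongrightarrow> 0" using less.hyps[OF deg \<open>q \<noteq> 0\<close>] less.prems by simp
    show ?thesis
    proof (cases "poly_mv M q v = 0")
      case True
      then show ?thesis using less.hyps[OF deg \<open>q \<noteq> 0\<close>] by simp
    next
      case False
      have "poly_mv M [:-z, 1:] (poly_mv M q v) = poly_mv M p v" unfolding pq poly_mv_mult ..
      then have "M *v poly_mv M q v - z *s poly_mv M q v = 0" using less.prems(2) by (simp only: poly_mv_linear)
      then have "cmod z < 1" using eig[OF False] by simp
      have "M *v v = w + z *s v" by (simp add: w_def)
      then have "orbit M (Suc t) v = orbit M t w + z *s orbit M t v" for t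
        by (simp add: orbit_Suc_right orbit_add orbit_scalar)
      then have step: "norm (orbit M (Suc t) v) \<le> cmod z * norm (orbit M t v) + norm (orbit M t w)" for t
        using norm_triangle_ineq[of "orbit M t w" "z *s orbit M t v"]
        by (simp add: norm_vector_scalar_mult)
      have "(\<lambda>t. norm (orbit M t v)) \<longlonglongrightarrow> 0"
        by (rule tendsto_zero_if_contracting[OF _ _ \<open>cmod z < 1\<close> step tendsto_norm_zero[OF w]]) auto
      then show ?thesis by (simp add: tendsto_norm_zero_iff)
    qed
  qed
qed

lemma orbit_tendsto_zero_if_eigenvalues_in_disc:
  fixes M :: "complex^'n^'n"
  assumes "\<And>l w. w \<noteq> 0 \<Longrightarrow> M *v w = l *s w \<Longrightarrow> cmod l < 1"
  shows "(\<lambda>t. orbit M t v) \<longlonglongrightarrow> 0"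
proof -
  obtain p where p: "p \<noteq> 0" "poly_mv M p v = 0" by (rule exists_annihilating_poly)
  show ?thesis by (rule orbit_tendsto_zero_if_annihilated[OF assms p])
qed

definition complex_vec :: "real^'n \<Rightarrow> complex^'n" where
  "complex_vec x = (\<chi> i. complex_of_real (x $ i))"

lemma complex_vec_orbit:
  "orbit (map_matrix complex_of_real M) t (complex_vec x) = complex_vec (orbit M t x)"
proof -
  have "map_matrix complex_of_real M *v complex_vec y = complex_vec (M *v y)" for y
    by (simp add: vec_eq_iff complex_vec_def matrix_vector_mult_def)
  then show ?thesis by (induct t) (simp_all add: orbit_Suc)
qed

lemma norm_complex_vec [simp]: "norm (complex_vec x) = norm x"
  by (simp add: norm_vec_def complex_vec_def)

lemma schur_stable_orbit_tendsto_zero: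
  assumes "schur_stable M"
  shows "(\<lambda>t. orbit M t x) \<longlonglongrightarrow> 0"
proof -
  have "(\<lambda>t. orbit (map_matrix complex_of_real M) t (complex_vec x)) \<longlonglongrightarrow> 0"
    using assms by (intro orbit_tendsto_zero_if_eigenvalues_in_disc) (auto simp: schur_stable_def)
  then have "(\<lambda>t. complex_vec (orbit M t x)) \<longlonglongrightarrow> 0" by (simp only: complex_vec_orbit)
  from tendsto_norm_zero[OF this] have "(\<lambda>t. norm (orbit M t x)) \<longlonglongrightarrow> 0" by simp
  then show ?thesis by (simp add: tendsto_norm_zero_iff)
qed

lemma norm_orbit_le_sum_axis:
  fixes M :: "real^'n^'n"
  shows "norm (orbit M t z) \<le> norm z * (\<Sum>i\<in>UNIV. norm (orbit M t (axis i 1)))"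
proof -
  have "orbit M t z = (\<Sum>i\<in>UNIV. z $ i *s orbit M t (axis i 1))"
    by (subst basis_expansion[symmetric, of z]) (simp add: orbit_sum orbit_scalar)
  then have "norm (orbit M t z) \<le> (\<Sum>i\<in>UNIV. \<bar>z $ i\<bar> * norm (orbit M t (axis i 1)))"
    using norm_sum[of "\<lambda>i. z $ i *s orbit M t (axis i 1)" UNIV]
    by (simp add: scalar_mult_eq_scaleR)
  also have "\<dots> \<le> (\<Sum>i\<in>UNIV. norm z * norm (orbit M t (axis i 1)))"
    by (intro sum_mono mult_right_mono component_le_norm_cart) auto
  finally show ?thesis by (simp add: sum_distrib_left)
qed

lemma orbit_uniform_bounds:
  fixes M :: "real^'n^'n"
  assumes "\<And>x. (\<lambda>t. orbit M t x) \<longlonglongrightarrow> 0"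
  obtains c T where "1 \<le> c" "1 \<le> T" "\<And>t z. norm (orbit M t z) \<le> c * norm z"
    "\<And>z. norm (orbit M T z) \<le> norm z / 2"
proof -
  define \<sigma> where "\<sigma> t = (\<Sum>i\<in>UNIV. norm (orbit M t (axis i 1 :: real^'n)))" for t
  have "\<sigma> \<longlonglongrightarrow> (\<Sum>i\<in>(UNIV::'n set). 0)"
    unfolding \<sigma>_def by (intro tendsto_sum tendsto_norm_zero assms)
  then have \<sigma>: "\<sigma> \<longlonglongrightarrow> 0" by simp
  then obtain K where K: "\<And>t. norm (\<sigma> t) \<le> K"
    using convergent_imp_Bseq[OF convergentI] BseqE by metis
  from LIMSEQ_D[OF \<sigma>, of "1/2"] obtain T0 where T0: "\<And>t. t \<ge> T0 \<Longrightarrow> norm (\<sigma> t) < 1/2"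
    by auto
  have "norm (orbit M t z) \<le> max 1 K * norm z" for t z
  proof -
    have "norm (orbit M t z) \<le> norm z * \<sigma> t" using norm_orbit_le_sum_axis by (simp add: \<sigma>_def)
    also have "\<dots> \<le> norm z * max 1 K" using K[of t] by (intro mult_left_mono) auto
    finally show ?thesis by (simp add: mult.commute)
  qed
  moreover have "norm (orbit M (Suc T0) z) \<le> norm z / 2" for z
  proof -
    have "norm (orbit M (Suc T0) z) \<le> norm z * \<sigma> (Suc T0)"
      using norm_orbit_le_sum_axis by (simp add: \<sigma>_def)
    also have "\<dots> \<le> norm z * (1/2)" using T0[of "Suc T0"] by (intro mult_left_mono) auto
    finally show ?thesis by simp
  qed
  ultimately show ?thesis by (intro that[of "max 1 K" "Suc T0"]) auto
qed

text \<open>The Lyapunov norm \<open>\<nu> z = \<Sum>s<T. |M\<^sup>s z|\<close> decreases by the factor \<open>1 - 1/(2Tc)\<close>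
  along orbits, because \<open>|M\<^sup>T z| \<le> |z|/2\<close> and \<open>\<nu> z \<le> T c |z|\<close>.\<close>

lemma stable_Lyapunov_norm:
  fixes M :: "real^'n^'n"
  assumes "\<And>x. (\<lambda>t. orbit M t x) \<longlonglongrightarrow> 0"
  obtains \<rho> K and \<nu> :: "real^'n \<Rightarrow> real" where "0 \<le> \<rho>" "\<rho> < 1"
    "\<And>z. norm z \<le> \<nu> z" "\<And>z. \<nu> z \<le> K * norm z" "\<And>z. \<nu> (M *v z) \<le> \<rho> * \<nu> z"
    "\<And>x y. \<nu> (x + y) \<le> \<nu> x + \<nu> y"
proof -
  obtain c T where c: "1 \<le> c" and T: "1 \<le> T" and bound: "\<And>t z. norm (orbit M t z) \<le> c * norm z"
    and half: "\<And>z. norm (orbit M T z) \<le> norm z / 2"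
    using orbit_uniform_bounds[OF assms] by blast
  define \<nu> where "\<nu> z = (\<Sum>s<T. norm (orbit M s z))" for z
  define \<rho> where "\<rho> = 1 - 1 / (2 * T * c)"
  have "1 * 1 \<le> T * c" using c T by (intro mult_mono) auto
  then have Tc: "1 \<le> T * c" by simp
  have le_\<nu>: "norm z \<le> \<nu> z" for z
    using member_le_sum[of 0 "{..<T}" "\<lambda>s. norm (orbit M s z)"] T by (simp add: \<nu>_def)
  have \<nu>_le: "\<nu> z \<le> T * c * norm z" for z
    using sum_mono[of "{..<T}" "\<lambda>s. norm (orbit M s z)" "\<lambda>s. c * norm z"] bound by (simp add: \<nu>_def)
  have "\<nu> (M *v z) \<le> \<rho> * \<nu> z" for z
  proof -
    have "\<nu> (M *v z) + norm z = (\<Sum>s<Suc T. norm (orbit M s z))"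
      unfolding \<nu>_def sum.lessThan_Suc_shift orbit_Suc_right orbit_0 by linarith
    also have "\<dots> = \<nu> z + norm (orbit M T z)" by (simp add: \<nu>_def)
    finally have "\<nu> (M *v z) = \<nu> z + norm (orbit M T z) - norm z" by simp
    also have "\<dots> \<le> \<nu> z - norm z / 2" using half[of z] by simp
    also have "\<dots> \<le> \<nu> z - \<nu> z / (2 * T * c)"
      using \<nu>_le[of z] Tc by (simp add: field_simps)
    finally show ?thesis by (simp add: \<rho>_def algebra_simps)
  qed
  moreover have "\<nu> (x + y) \<le> \<nu> x + \<nu> y" for x y
    unfolding \<nu>_def by (simp add: orbit_add sum.distrib[symmetric] sum_mono norm_triangle_ineq)
  moreover have "0 \<le> \<rho>" "\<rho> < 1" using Tc by (simp_all add: \<rho>_def field_simps)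
  ultimately show ?thesis using that[of \<rho> \<nu>] le_\<nu> \<nu>_le by blast
qed

lemma stable_orbit_exponential_bound:
  fixes M :: "real^'n^'n"
  assumes "\<And>x. (\<lambda>t. orbit M t x) \<longlonglongrightarrow> 0"
  obtains \<kappa> \<rho> where "0 \<le> \<rho>" "\<rho> < 1" "\<And>t z. norm (orbit M t z) \<le> \<kappa> * \<rho> ^ t * norm z"
proof -
  obtain \<rho> K and \<nu> :: "real^'n \<Rightarrow> real" where \<rho>: "0 \<le> \<rho>" "\<rho> < 1"
    and \<nu>: "\<And>z. norm z \<le> \<nu> z" "\<And>z. \<nu> z \<le> K * norm z" "\<And>z. \<nu> (M *v z) \<le> \<rho> * \<nu> z"
    using stable_Lyapunov_norm[OF assms] by metis
  have "\<nu> (orbit M t z) \<le> \<rho> ^ t * \<nu> z" for t z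
  proof (induct t)
    case (Suc t)
    then show ?case
      using \<nu>(3)[of "orbit M t z"] mult_left_mono[OF Suc \<rho>(1)] by (simp add: orbit_Suc)
  qed simp
  then have "norm (orbit M t z) \<le> K * \<rho> ^ t * norm z" for t z
  proof -
    have "norm (orbit M t z) \<le> \<rho> ^ t * \<nu> z"
      using \<nu>(1)[of "orbit M t z"] \<open>\<nu> (orbit M t z) \<le> \<rho> ^ t * \<nu> z\<close> by linarith
    also have "\<dots> \<le> \<rho> ^ t * (K * norm z)" using \<nu>(2) \<rho>(1) by (simp add: mult_left_mono)
    finally show ?thesis by (simp add: mult_ac)
  qed
  with \<rho> show ?thesis by (intro that)
qed

lemma stable_perturbed_tendsto_zero:
  fixes M :: "real^'n^'n"
  assumes "\<And>x. (\<lambda>t. orbit M t x) \<longlonglongrightarrow> 0"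
    and y: "\<And>t. y (Suc t) = M *v y t + w t" and w: "w \<longlonglongrightarrow> 0"
  shows "y \<longlonglongrightarrow> 0"
proof -
  obtain \<rho> K and \<nu> :: "real^'n \<Rightarrow> real" where \<rho>: "0 \<le> \<rho>" "\<rho> < 1"
    and \<nu>: "\<And>z. norm z \<le> \<nu> z" "\<And>z. \<nu> z \<le> K * norm z" "\<And>z. \<nu> (M *v z) \<le> \<rho> * \<nu> z"
      "\<And>x y. \<nu> (x + y) \<le> \<nu> x + \<nu> y"
    using stable_Lyapunov_norm[OF assms(1)] by metis
  have step: "\<nu> (y (Suc t)) \<le> \<rho> * \<nu> (y t) + K * norm (w t)" for t
    using \<nu>(4)[of "M *v y t" "w t"] \<nu>(3)[of "y t"] \<nu>(2)[of "w t"] unfolding y by linarith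
  have "(\<lambda>t. K * norm (w t)) \<longlonglongrightarrow> 0"
    using w by (intro tendsto_mult_right_zero tendsto_norm_zero)
  moreover have "0 \<le> \<nu> (y t)" for t using \<nu>(1)[of "y t"] norm_ge_zero[of "y t"] by linarith
  ultimately have "(\<lambda>t. \<nu> (y t)) \<longlonglongrightarrow> 0"
    using tendsto_zero_if_contracting[where s = "\<lambda>t. \<nu> (y t)", OF _ \<rho> step] by blast
  then show ?thesis
    by (rule Lim_null_comparison[rotated]) (use \<nu>(1) in auto)
qed

section \<open>Quadratic forms and positive definite matrices\<close>

lemma transpose_add: "transpose (A + B) = transpose A + transpose (B::'a::semiring_1^'n^'m)"
  by (simp add: transpose_def vec_eq_iff)

lemma transpose_diff: "transpose (A - B) = transpose A - transpose (B::'a::ring_1^'n^'m)"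
  by (simp add: transpose_def vec_eq_iff)

lemma transpose_zero [simp]: "transpose (0::'a::semiring_1^'n^'m) = 0"
  by (simp add: transpose_def vec_eq_iff)

lemma matrix_add_rdistrib: "(A + B) ** (C::'a::semiring_1^'p^'n) = A ** C + B ** C"
  by (simp add: matrix_matrix_mult_def vec_eq_iff sum.distrib distrib_right)

lemma matrix_sum_rdistrib: "(\<Sum>k\<in>I. f k) ** (C::'a::semiring_1^'p^'n) = (\<Sum>k\<in>I. f k ** C)"
  by (induct I rule: infinite_finite_induct) (simp_all add: matrix_add_rdistrib)

lemma matrix_vector_mult_uminus: "(- M) *v x = - (M *v (x::'a::ring_1^'n))"
  by (simp add: vec_eq_iff matrix_vector_mult_def sum_negf)

lemma inner_matrix_vector_mult: "(x::real^'n) \<bullet> (M *v y) = (transpose M *v x) \<bullet> y"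
  by (simp add: dot_lmul_matrix transpose_matrix_vector)

lemma inner_matrix_vector_mult': "(M *v x) \<bullet> (y::real^'n) = x \<bullet> (transpose M *v y)"
  by (metis inner_matrix_vector_mult transpose_transpose)

lemma norm_matrix_vector_mult_le: "norm ((M::real^'n^'m) *v x) \<le> norm M * norm x"
proof -
  have "norm (M *v x) \<le> L2_set (\<lambda>i. norm x * norm (M $ i)) UNIV"
    unfolding norm_vec_def[of "M *v x"] matrix_vector_mul_component
    by (intro L2_set_mono) (auto simp: mult.commute[of "norm x"] intro: Cauchy_Schwarz_ineq2)
  also have "\<dots> = norm x * norm M"
    by (simp add: norm_vec_def[of M] L2_set_right_distrib)
  finally show ?thesis by (simp add: mult.commute)
qed

lemma tendsto_matrix_mult:
  assumes "(f \<longlongrightarrow> (a::real^'n^'m)) F" "(g \<longlongrightarrow> (b::real^'p^'n)) F"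
  shows "((\<lambda>k. f k ** g k) \<longlongrightarrow> a ** b) F"
  unfolding matrix_matrix_mult_def by (intro vec_tendstoI) (simp add: tendsto_intros assms)

lemma tendsto_transpose:
  assumes "(f \<longlongrightarrow> (a::real^'n^'m)) F"
  shows "((\<lambda>k. transpose (f k)) \<longlongrightarrow> transpose a) F"
  unfolding transpose_def by (intro vec_tendstoI) (simp add: tendsto_intros assms)

definition qform :: "real^'n^'n \<Rightarrow> real^'n \<Rightarrow> real" where
  "qform M x = x \<bullet> (M *v x)"

lemma qform_add_matrix: "qform (M + N) x = qform M x + qform N x"
  by (simp add: qform_def matrix_vector_mult_add_rdistrib inner_add_right)

lemma qform_diff_matrix: "qform (M - N) x = qform M x - qform N x"
  by (simp add: qform_def matrix_vector_mult_diff_rdistrib inner_diff_right)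

lemma qform_zero [simp]: "qform 0 x = 0" "qform M 0 = 0"
  by (simp_all add: qform_def)

lemma qform_transpose_mult: "qform (transpose B ** X ** B) u = qform X (B *v u)"
  by (simp add: qform_def inner_matrix_vector_mult' matrix_vector_mul_assoc[symmetric])

lemma qform_transpose_mult_self: "qform (transpose C ** C) x = (norm (C *v x))\<^sup>2"
  by (simp add: qform_def inner_matrix_vector_mult' matrix_vector_mul_assoc[symmetric]
      power2_norm_eq_inner)

lemma qform_scaleR: "qform M (c *\<^sub>R x) = c\<^sup>2 * qform M x"
  by (simp add: qform_def matrix_vector_mult_scaleR power2_eq_square)

lemma qform_sum_expansion: "qform M x = (\<Sum>i\<in>UNIV. \<Sum>j\<in>UNIV. x $ i * M $ i $ j * x $ j)"
  by (simp add: qform_def inner_vec_def matrix_vector_mult_def sum_distrib_left mult_ac)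

lemma abs_qform_le: "\<bar>qform M y\<bar> \<le> norm M * (norm y)\<^sup>2"
proof -
  have "\<bar>qform M y\<bar> \<le> norm y * norm (M *v y)" unfolding qform_def by (rule Cauchy_Schwarz_ineq2)
  also have "\<dots> \<le> norm y * (norm M * norm y)"
    by (intro mult_left_mono norm_matrix_vector_mult_le) auto
  finally show ?thesis by (simp add: power2_eq_square mult_ac)
qed

lemma tendsto_qform:
  assumes "(f \<longlongrightarrow> (M::real^'n^'n)) F" "(g \<longlongrightarrow> x) F"
  shows "((\<lambda>k. qform (f k) (g k)) \<longlongrightarrow> qform M x) F"
  unfolding qform_sum_expansion by (intro tendsto_intros assms)

lemma qform_add_symmetric:
  assumes "transpose M = M"
  shows "qform M (x + y) = qform M x + 2 * (x \<bullet> (M *v y)) + qform M y"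
proof -
  have "y \<bullet> (M *v x) = x \<bullet> (M *v y)"
    by (metis assms inner_matrix_vector_mult inner_commute)
  then show ?thesis
    by (simp add: qform_def matrix_vector_right_distrib inner_add_left inner_add_right)
qed

lemma symmetric_entry_polarization:
  assumes "transpose M = M"
  shows "M $ i $ j = (qform M (axis i 1 + axis j 1) - qform M (axis i 1) - qform M (axis j 1)) / 2"
proof -
  have "M *v axis j 1 = (\<chi> i. M $ i $ j)" for j
    by (simp add: matrix_vector_mult_basis column_def)
  then show ?thesis
    using qform_add_symmetric[OF assms, of "axis i 1" "axis j 1"] by (simp add: qform_def inner_axis')
qed

lemma symmetric_eq_if_qform_eq:
  assumes "transpose X = X" "transpose Y = Y" "\<And>x. qform X x = qform Y x"
  shows "X = Y"
  unfolding vec_eq_iff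
  using symmetric_entry_polarization[OF assms(1)] symmetric_entry_polarization[OF assms(2)] assms(3)
  by metis

lemma psd_symmetric: "psd X \<Longrightarrow> transpose X = X"
  by (simp add: psd_def)

lemma psd_qform_nonneg: "psd X \<Longrightarrow> 0 \<le> qform X x"
  by (simp add: psd_def qform_def)

lemma psd_iff_qform: "psd X \<longleftrightarrow> transpose X = X \<and> (\<forall>x. 0 \<le> qform X x)"
  by (simp add: psd_def qform_def)

lemma pd_symmetric: "pd X \<Longrightarrow> transpose X = X"
  by (simp add: pd_def)

lemma pd_imp_psd: "pd X \<Longrightarrow> psd X"
  unfolding pd_def psd_def by (metis inner_zero_left less_eq_real_def)

lemma pd_inverse:
  assumes "pd (G::real^'n^'n)"
  shows "G ** matrix_inv G = mat 1" "matrix_inv G ** G = mat 1"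
proof -
  have "G *v x = 0 \<Longrightarrow> x = 0" for x
    using assms unfolding pd_def by (metis inner_zero_right less_irrefl)
  then have "invertible G"
    by (simp add: matrix_left_invertible_ker invertible_left_inverse)
  then have "\<exists>G'. G ** G' = mat 1 \<and> G' ** G = mat 1" by (simp add: invertible_def)
  then have "G ** matrix_inv G = mat 1 \<and> matrix_inv G ** G = mat 1"
    unfolding matrix_inv_def by (rule someI_ex)
  then show "G ** matrix_inv G = mat 1" "matrix_inv G ** G = mat 1" by auto
qed

lemma transpose_inverse_symmetric:
  assumes "transpose G = G" "G ** G' = mat 1" "G' ** (G::real^'n^'n) = mat 1"
  shows "transpose G' = G'"
proof -
  have "transpose G' = transpose G' ** (G ** G')" using assms(2) by simp
  also have "\<dots> = transpose (G ** G') ** G'" by (simp add: matrix_mul_assoc matrix_transpose_mul assms(1))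
  finally show ?thesis using assms(2) by simp
qed

lemma pd_cancel_sandwich:
  assumes "pd S" "S ** P ** S = S ** W ** (S::real^'k^'k)"
  shows "P = W"
proof -
  let ?Si = "matrix_inv S"
  have "P = (?Si ** S) ** P ** (S ** ?Si)" using pd_inverse[OF assms(1)] by simp
  also have "\<dots> = ?Si ** (S ** P ** S) ** ?Si" by (simp add: matrix_mul_assoc)
  also have "\<dots> = (?Si ** S) ** W ** (S ** ?Si)" by (simp add: assms(2) matrix_mul_assoc)
  also have "\<dots> = W" using pd_inverse[OF assms(1)] by simp
  finally show ?thesis .
qed

lemma sandwich_cancel_congruence:
  assumes "pd S" "H = S ** G"
    and "S ** P ** S = S ** M ** S + H ** Z ** transpose H"
  shows "P = M + G ** Z ** transpose G"
proof (rule pd_cancel_sandwich[OF assms(1)])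
  have "H ** Z ** transpose H = S ** (G ** Z ** transpose G) ** S"
    by (simp only: assms(2) matrix_transpose_mul pd_symmetric[OF assms(1)] matrix_mul_assoc)
  then show "S ** P ** S = S ** (M + G ** Z ** transpose G) ** S"
    using assms(3) by (simp only: matrix_add_ldistrib matrix_add_rdistrib)
qed

lemma pd_coercive:
  assumes "pd (R::real^'m^'m)"
  obtains r where "0 < r" "\<And>u. r * (norm u)\<^sup>2 \<le> qform R u"
proof -
  have cont: "continuous_on (sphere 0 1) (qform R)"
    unfolding qform_sum_expansion by (intro continuous_intros)
  obtain i :: 'm where True by simp
  then have "axis i 1 \<in> sphere (0::real^'m) 1" by simp
  then obtain u0 where u0: "u0 \<in> sphere 0 1" "\<And>y. y \<in> sphere 0 1 \<Longrightarrow> qform R u0 \<le> qform R y"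
    using continuous_attains_inf[OF compact_sphere _ cont] by blast
  then have "u0 \<noteq> 0" by auto
  then have "0 < qform R u0" using assms by (simp add: pd_def qform_def)
  moreover have "qform R u0 * (norm u)\<^sup>2 \<le> qform R u" for u
  proof (cases "u = 0")
    case False
    then have "qform R u0 \<le> qform R ((1 / norm u) *\<^sub>R u)" by (intro u0(2)) simp
    also have "\<dots> = qform R u / (norm u)\<^sup>2" by (simp add: qform_scaleR power_divide)
    finally show ?thesis using False by (simp add: le_divide_eq)
  qed simp
  ultimately show ?thesis by (rule that)
qed

lemma pd_add_psd_congruence:
  assumes "psd X" "pd R"
  shows "pd (R + transpose B ** X ** B)"
proof -
  have "transpose (R + transpose B ** X ** B) = R + transpose B ** X ** B"
    using assms by (simp add: transpose_add matrix_transpose_mul psd_symmetric pd_symmetric matrix_mul_assoc)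
  moreover have "0 < u \<bullet> ((R + transpose B ** X ** B) *v u)" if "u \<noteq> 0" for u
  proof -
    have "0 < u \<bullet> (R *v u)" using assms(2) that by (simp add: pd_def)
    moreover have "0 \<le> qform (transpose B ** X ** B) u"
      unfolding qform_transpose_mult by (rule psd_qform_nonneg[OF assms(1)])
    ultimately show ?thesis
      by (simp add: qform_def matrix_vector_mult_add_rdistrib inner_add_right)
  qed
  ultimately show ?thesis by (simp add: pd_def)
qed

section \<open>The Riccati operator and value iteration\<close>

definition riccati :: "real^'n^'n \<Rightarrow> real^'m^'n \<Rightarrow> real^'n^'n \<Rightarrow> real^'m^'m \<Rightarrow> real^'n^'n \<Rightarrow> real^'n^'n"
  where "riccati A B Q R X = transpose A ** X ** A
    - transpose A ** X ** B ** matrix_inv (R + transpose B ** X ** B) ** transpose B ** X ** A + Q"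

definition lq_gain :: "real^'n^'n \<Rightarrow> real^'m^'n \<Rightarrow> real^'m^'m \<Rightarrow> real^'n^'n \<Rightarrow> real^'n^'m"
  where "lq_gain A B R X = - (matrix_inv (R + transpose B ** X ** B) ** transpose B ** X ** A)"

definition lq_cost :: "real^'n^'n \<Rightarrow> real^'m^'n \<Rightarrow> real^'n^'n \<Rightarrow> real^'m^'m \<Rightarrow> real^'n^'n
    \<Rightarrow> real^'n \<Rightarrow> real^'m \<Rightarrow> real"
  where "lq_cost A B Q R X x u = qform Q x + qform R u + qform X (A *v x + B *v u)"

definition loewner_le :: "real^'n^'n \<Rightarrow> real^'n^'n \<Rightarrow> bool"
  where "loewner_le X Y \<longleftrightarrow> (\<forall>x. qform X x \<le> qform Y x)"

lemma lq_cost_complete_square: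
  assumes X: "psd X" and R: "pd R"
  shows "lq_cost A B Q R X x u
    = qform (riccati A B Q R X) x + qform (R + transpose B ** X ** B) (u - lq_gain A B R X *v x)"
proof -
  define G where "G = R + transpose B ** X ** B"
  have G: "pd G" unfolding G_def by (rule pd_add_psd_congruence[OF X R])
  have X_sym: "transpose X = X" using X by (rule psd_symmetric)
  define a where "a = A *v x"
  define h where "h = transpose B *v (X *v a)"
  define g where "g = matrix_inv G *v h"
  have Gg: "G *v g = h" by (simp add: g_def matrix_vector_mul_assoc pd_inverse[OF G])
  have Xab: "a \<bullet> (X *v (B *v v)) = h \<bullet> v" for v
    by (simp add: inner_matrix_vector_mult X_sym h_def)
  have "riccati A B Q R X *v x = transpose A *v (X *v a) - transpose A *v (X *v (B *v g)) + Q *v x"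
    unfolding riccati_def a_def g_def h_def G_def
    by (simp add: matrix_vector_mult_add_rdistrib matrix_vector_mult_diff_rdistrib
        matrix_vector_mul_assoc[symmetric])
  moreover have "x \<bullet> (transpose A *v w) = a \<bullet> w" for w
    by (simp add: a_def inner_matrix_vector_mult')
  ultimately have ric: "qform (riccati A B Q R X) x = qform X a - h \<bullet> g + qform Q x"
    unfolding qform_def by (simp add: inner_add_right inner_diff_right Xab)
  have "g \<bullet> (G *v u) = h \<bullet> u"
    by (simp add: inner_matrix_vector_mult pd_symmetric[OF G] Gg)
  then have "qform G (u + g) = qform G u + 2 * (h \<bullet> u) + h \<bullet> g"
    by (simp add: qform_def matrix_vector_right_distrib inner_add_left inner_add_right Gg inner_commute)
  moreover have "qform G u = qform R u + qform X (B *v u)"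
    by (simp add: G_def qform_add_matrix qform_transpose_mult)
  moreover have "qform X (a + B *v u) = qform X a + 2 * (h \<bullet> u) + qform X (B *v u)"
    using qform_add_symmetric[OF X_sym, of a "B *v u"] Xab[of u] by simp
  moreover have "lq_gain A B R X *v x = - g"
    by (simp add: lq_gain_def g_def h_def a_def G_def matrix_vector_mul_assoc[symmetric]
        matrix_vector_mult_uminus)
  ultimately show ?thesis
    by (simp add: lq_cost_def ric G_def flip: a_def)
qed

locale lqr =
  fixes A :: "real^'n^'n" and B :: "real^'m^'n" and Q :: "real^'n^'n" and R :: "real^'m^'m"
  assumes Q_psd: "psd Q" and R_pd: "pd R"
begin

abbreviation "Ric \<equiv> riccati A B Q R"
abbreviation "cost \<equiv> lq_cost A B Q R"
abbreviation "gain \<equiv> lq_gain A B R"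

lemma cost_ge_input_cost: "psd X \<Longrightarrow> qform R u \<le> cost X x u"
  unfolding lq_cost_def using psd_qform_nonneg[OF Q_psd, of x] psd_qform_nonneg[of X] by simp

lemma riccati_le_cost:
  assumes "psd X"
  shows "qform (Ric X) x \<le> cost X x u"
proof -
  have "0 \<le> qform (R + transpose B ** X ** B) (u - gain X *v x)"
    by (rule psd_qform_nonneg[OF pd_imp_psd[OF pd_add_psd_congruence[OF assms R_pd]]])
  then show ?thesis using lq_cost_complete_square[OF assms R_pd, of A B Q x u] by linarith
qed

lemma riccati_eq_cost_gain: "psd X \<Longrightarrow> qform (Ric X) x = cost X x (gain X *v x)"
  using lq_cost_complete_square[of X R A B Q x "gain X *v x"] R_pd by simp

lemma cost_feedback:
  "cost X x (K *v x) = qform Q x + qform R (K *v x) + qform X ((A + B ** K) *v x)"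
  by (simp add: lq_cost_def matrix_vector_mult_add_rdistrib matrix_vector_mul_assoc)

lemma cost_mono: "loewner_le X Y \<Longrightarrow> cost X x u \<le> cost Y x u"
  unfolding lq_cost_def loewner_le_def by simp

lemma riccati_symmetric:
  assumes "psd X"
  shows "transpose (Ric X) = Ric X"
proof -
  have G: "pd (R + transpose B ** X ** B)" by (rule pd_add_psd_congruence[OF assms R_pd])
  have "transpose (matrix_inv (R + transpose B ** X ** B)) = matrix_inv (R + transpose B ** X ** B)"
    by (rule transpose_inverse_symmetric[OF pd_symmetric[OF G] pd_inverse[OF G]])
  then show ?thesis
    unfolding riccati_def using psd_symmetric[OF assms] psd_symmetric[OF Q_psd]
    by (simp add: transpose_add transpose_diff matrix_transpose_mul matrix_mul_assoc)
qed

lemma riccati_psd: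
  assumes "psd X"
  shows "psd (Ric X)"
proof -
  have "0 \<le> qform (Ric X) x" for x
    using psd_qform_nonneg[OF pd_imp_psd[OF R_pd], of "gain X *v x"] cost_ge_input_cost[OF assms]
      riccati_eq_cost_gain[OF assms] by (metis order_trans)
  then show ?thesis using riccati_symmetric[OF assms] by (simp add: psd_iff_qform)
qed

lemma riccati_mono:
  assumes "psd X" "psd Y" "loewner_le X Y"
  shows "loewner_le (Ric X) (Ric Y)"
  unfolding loewner_le_def
proof
  fix x
  have "qform (Ric X) x \<le> cost X x (gain Y *v x)" by (rule riccati_le_cost[OF assms(1)])
  also have "\<dots> \<le> cost Y x (gain Y *v x)" by (rule cost_mono[OF assms(3)])
  also have "\<dots> = qform (Ric Y) x" by (rule riccati_eq_cost_gain[OF assms(2), symmetric])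
  finally show "qform (Ric X) x \<le> qform (Ric Y) x" .
qed

definition value_iter :: "nat \<Rightarrow> real^'n^'n" where
  "value_iter k = (Ric ^^ k) 0"

lemma value_iter_0: "value_iter 0 = 0"
  by (simp add: value_iter_def)

lemma value_iter_Suc: "value_iter (Suc k) = Ric (value_iter k)"
  by (simp add: value_iter_def)

lemma value_iter_psd: "psd (value_iter k)"
proof (induct k)
  case 0
  show ?case by (simp add: value_iter_0 psd_def)
next
  case (Suc k)
  then show ?case by (simp add: value_iter_Suc riccati_psd)
qed

lemma value_iter_mono: "loewner_le (value_iter k) (value_iter (Suc k))"
proof (induct k)
  case 0
  show ?case using value_iter_psd[of 1] by (simp add: loewner_le_def value_iter_0 psd_qform_nonneg)
next
  case (Suc k)
  then show ?case
    using riccati_mono[OF value_iter_psd[of k] value_iter_psd[of "Suc k"]] by (simp add: value_iter_Suc)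
qed

lemma incseq_qform_value_iter: "incseq (\<lambda>k. qform (value_iter k) x)"
  using value_iter_mono by (intro incseq_SucI) (simp add: loewner_le_def)

lemma value_iter_le_fixpoint: "psd Y \<Longrightarrow> Ric Y = Y \<Longrightarrow> loewner_le (value_iter k) Y"
proof (induct k)
  case 0
  then show ?case by (simp add: loewner_le_def value_iter_0 psd_qform_nonneg)
next
  case (Suc k)
  then show ?case using riccati_mono[OF value_iter_psd Suc.prems(1)] by (simp add: value_iter_Suc)
qed

end

lemma feedback_stage_cost_le:
  "qform Q y + qform R (K *v y) \<le> (norm Q + norm R * (norm K)\<^sup>2) * (norm y)\<^sup>2"
proof -
  have "qform R (K *v y) \<le> norm R * (norm (K *v y))\<^sup>2" by (rule abs_le_D1[OF abs_qform_le])
  also have "\<dots> \<le> norm R * (norm K * norm y)\<^sup>2"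
    by (intro mult_left_mono power_mono norm_matrix_vector_mult_le) auto
  finally have "qform Q y + qform R (K *v y) \<le> norm Q * (norm y)\<^sup>2 + norm R * ((norm K)\<^sup>2 * (norm y)\<^sup>2)"
    using abs_le_D1[OF abs_qform_le[of Q y]] unfolding power_mult_distrib by linarith
  then show ?thesis by (simp add: algebra_simps)
qed

context lqr
begin

lemma value_iter_le_feedback_cost:
  "qform (value_iter k) x \<le> (\<Sum>t<k. qform Q (orbit (A + B ** K) t x) + qform R (K *v orbit (A + B ** K) t x))"
proof (induct k arbitrary: x)
  case (Suc k)
  have "qform (value_iter (Suc k)) x \<le> cost (value_iter k) x (K *v x)"
    unfolding value_iter_Suc by (rule riccati_le_cost[OF value_iter_psd])
  also have "\<dots> = qform Q x + qform R (K *v x) + qform (value_iter k) ((A + B ** K) *v x)"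
    by (rule cost_feedback)
  also have "\<dots> \<le> (\<Sum>t<Suc k. qform Q (orbit (A + B ** K) t x) + qform R (K *v orbit (A + B ** K) t x))"
    using Suc[of "(A + B ** K) *v x"] by (simp add: sum.lessThan_Suc_shift orbit_Suc_right del: sum.lessThan_Suc)
  finally show ?case .
qed (simp add: value_iter_0)

lemma value_iter_bounded:
  assumes "stabilizable A B"
  shows "bdd_above (range (\<lambda>k. qform (value_iter k) x))"
proof -
  obtain K where "schur_stable (A + B ** K)" using assms unfolding stabilizable_def by blast
  then obtain \<kappa> \<rho> where \<rho>: "0 \<le> \<rho>" "\<rho> < 1"
    and decay: "\<And>t z. norm (orbit (A + B ** K) t z) \<le> \<kappa> * \<rho> ^ t * norm z"
    using stable_orbit_exponential_bound schur_stable_orbit_tendsto_zero by metis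
  define c where "c = (norm Q + norm R * (norm K)\<^sup>2) * (\<kappa> * norm x)\<^sup>2"
  define f where "f t = qform Q (orbit (A + B ** K) t x) + qform R (K *v orbit (A + B ** K) t x)" for t
  have f_le: "f t \<le> c * (\<rho>\<^sup>2) ^ t" for t
  proof -
    have "f t \<le> (norm Q + norm R * (norm K)\<^sup>2) * (norm (orbit (A + B ** K) t x))\<^sup>2"
      unfolding f_def by (rule feedback_stage_cost_le)
    also have "\<dots> \<le> (norm Q + norm R * (norm K)\<^sup>2) * (\<kappa> * \<rho> ^ t * norm x)\<^sup>2"
      by (intro mult_left_mono power_mono decay) auto
    also have "\<dots> = c * (\<rho>\<^sup>2) ^ t"
      by (simp add: c_def power_mult_distrib flip: power_mult) (simp add: mult.commute)
    finally show ?thesis .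
  qed
  have f_nonneg: "0 \<le> f t" for t
    using psd_qform_nonneg[OF Q_psd] psd_qform_nonneg[OF pd_imp_psd[OF R_pd]] by (simp add: f_def)
  have "summable (\<lambda>t. c * (\<rho>\<^sup>2) ^ t)"
    using \<rho> by (intro summable_mult summable_geometric) (simp add: abs_square_less_1)
  then have "summable f"
    by (rule summable_comparison_test'[where N = 0]) (simp add: f_le f_nonneg)
  have "qform (value_iter k) x \<le> suminf f" for k
  proof -
    have "qform (value_iter k) x \<le> sum f {..<k}"
      using value_iter_le_feedback_cost[of k x K] by (simp add: f_def)
    also have "\<dots> \<le> suminf f" by (rule sum_le_suminf) (use \<open>summable f\<close> f_nonneg in auto)
    finally show ?thesis .
  qed
  then show ?thesis by (intro bdd_aboveI2)
qed

lemma value_iter_converges: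
  assumes "stabilizable A B"
  obtains X where "value_iter \<longlonglongrightarrow> X"
proof -
  define q where "q x = (SUP k. qform (value_iter k) x)" for x
  have q: "(\<lambda>k. qform (value_iter k) x) \<longlonglongrightarrow> q x" for x
    unfolding q_def by (rule LIMSEQ_incseq_SUP[OF value_iter_bounded[OF assms] incseq_qform_value_iter])
  define X where "X = (\<chi> i j. (q (axis i 1 + axis j 1) - q (axis i 1) - q (axis j 1)) / 2 :: real^'n^'n)"
  have "value_iter \<longlonglongrightarrow> X"
  proof (intro vec_tendstoI)
    fix i j
    show "(\<lambda>k. value_iter k $ i $ j) \<longlonglongrightarrow> X $ i $ j"
      unfolding symmetric_entry_polarization[OF psd_symmetric[OF value_iter_psd]] X_def
      by (simp add: tendsto_intros q)
  qed
  then show ?thesis by (rule that)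
qed

lemma limit_psd_above:
  assumes "value_iter \<longlonglongrightarrow> X"
  shows "psd X" "loewner_le (value_iter k) X"
proof -
  have qlim: "(\<lambda>k. qform (value_iter k) x) \<longlonglongrightarrow> qform X x" for x
    by (rule tendsto_qform[OF assms tendsto_const])
  have "(\<lambda>k. transpose (value_iter k)) \<longlonglongrightarrow> transpose X" by (rule tendsto_transpose[OF assms])
  then have "transpose X = X"
    using psd_symmetric[OF value_iter_psd] assms LIMSEQ_unique by (metis (no_types, lifting) ext)
  moreover have "0 \<le> qform X x" for x
    by (rule LIMSEQ_le_const[OF qlim]) (use psd_qform_nonneg[OF value_iter_psd] in auto)
  ultimately show "psd X" by (simp add: psd_iff_qform)
  show "loewner_le (value_iter k) X"
    unfolding loewner_le_def using incseq_le[OF incseq_qform_value_iter qlim] by auto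
qed

text \<open>The minimizers \<open>u\<^sub>k = K(X\<^sub>k) x\<close> stay bounded since \<open>r |u\<^sub>k|\<^sup>2 \<le> x\<^sup>T X\<^sub>k\<^sub>+\<^sub>1 x \<le> x\<^sup>T X x\<close>,
  so replacing \<open>X\<^sub>k\<close> by the limit \<open>X\<close> in their cost costs only \<open>o(1)\<close>.\<close>

lemma riccati_limit_le:
  assumes lim: "value_iter \<longlonglongrightarrow> X"
  shows "qform (Ric X) x \<le> qform X x"
proof -
  note X = limit_psd_above[OF lim]
  obtain r where r: "0 < r" "\<And>u. r * (norm u)\<^sup>2 \<le> qform R u" using pd_coercive[OF R_pd] by blast
  define u where "u k = gain (value_iter k) *v x" for k
  define y where "y k = A *v x + B *v u k" for k
  have cost_le: "cost (value_iter k) x (u k) \<le> qform X x" for k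
  proof -
    have "qform (value_iter (Suc k)) x \<le> qform X x" using X(2) by (simp add: loewner_le_def)
    then show ?thesis using riccati_eq_cost_gain[OF value_iter_psd, of k x] by (simp add: u_def value_iter_Suc)
  qed
  define c where "c = (norm (A *v x) + norm B * sqrt (qform X x / r))\<^sup>2"
  have y_bound: "(norm (y k))\<^sup>2 \<le> c" for k
  proof -
    have "(norm (u k))\<^sup>2 \<le> qform X x / r"
      using r(1) r(2)[of "u k"] cost_le[of k] cost_ge_input_cost[OF value_iter_psd, of "u k" k x]
      by (simp add: le_divide_eq mult.commute)
    then have "norm (u k) \<le> sqrt (qform X x / r)" by (simp add: real_le_rsqrt)
    then have "norm (y k) \<le> norm (A *v x) + norm B * sqrt (qform X x / r)"
      unfolding y_def using norm_triangle_ineq[of "A *v x" "B *v u k"] norm_matrix_vector_mult_le[of B "u k"]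
      by (smt (verit) mult_left_mono norm_ge_zero)
    then show ?thesis unfolding c_def by (intro power_mono) auto
  qed
  have bound: "qform (Ric X) x \<le> qform X x + norm (X - value_iter k) * c" for k
  proof -
    have "qform (Ric X) x \<le> cost X x (u k)" by (rule riccati_le_cost[OF X(1)])
    also have "\<dots> = cost (value_iter k) x (u k) + qform (X - value_iter k) (y k)"
      by (simp add: lq_cost_def qform_diff_matrix y_def)
    also have "\<dots> \<le> qform X x + norm (X - value_iter k) * c"
      using cost_le[of k] abs_qform_le[of "X - value_iter k" "y k"] y_bound[of k]
        mult_left_mono[OF y_bound[of k] norm_ge_zero[of "X - value_iter k"]]
      by linarith
    finally show ?thesis .
  qed
  have "(\<lambda>k. qform X x + norm (X - value_iter k) * c) \<longlonglongrightarrow> qform X x + norm (X - X) * c"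
    by (intro tendsto_intros lim)
  then have "(\<lambda>k. qform X x + norm (X - value_iter k) * c) \<longlonglongrightarrow> qform X x" by simp
  then show ?thesis by (rule tendsto_lowerbound) (simp_all add: bound)
qed

lemma limit_riccati_fixpoint:
  assumes lim: "value_iter \<longlonglongrightarrow> X"
  shows "Ric X = X"
proof (rule symmetric_eq_if_qform_eq)
  note X = limit_psd_above[OF lim]
  show "transpose (Ric X) = Ric X" "transpose X = X"
    using riccati_symmetric psd_symmetric X(1) by auto
  have "qform X x \<le> qform (Ric X) x" for x
  proof (rule LIMSEQ_le_const2[OF LIMSEQ_Suc[OF tendsto_qform[OF lim tendsto_const]]])
    show "\<exists>N. \<forall>k\<ge>N. qform (value_iter (Suc k)) x \<le> qform (Ric X) x"
      using riccati_mono[OF value_iter_psd X(1) X(2)] by (simp add: value_iter_Suc loewner_le_def)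
  qed
  then show "qform (Ric X) x = qform X x" for x
    using riccati_limit_le[OF lim] by (meson order_antisym)
qed

end

lemma tendsto_zero_if_norm_square_le:
  fixes f :: "nat \<Rightarrow> 'a::real_normed_vector"
  assumes "\<And>t. (norm (f t))\<^sup>2 \<le> g t" and "g \<longlonglongrightarrow> 0"
  shows "f \<longlonglongrightarrow> 0"
proof -
  have "(\<lambda>t. norm (f t)) \<longlonglongrightarrow> 0"
  proof (rule Lim_null_comparison[OF always_eventually])
    show "\<forall>t. norm (norm (f t)) \<le> sqrt (g t)" using assms(1) by (simp add: real_le_rsqrt)
    show "(\<lambda>t. sqrt (g t)) \<longlonglongrightarrow> 0" using tendsto_real_sqrt[OF assms(2)] by simp
  qed
  then show ?thesis by (simp add: tendsto_norm_zero_iff)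
qed

context lqr
begin

lemma fixpoint_qform_closed_loop:
  assumes "psd X" "Ric X = X"
  shows "qform X x = qform Q x + qform R (gain X *v x) + qform X ((A + B ** gain X) *v x)"
proof -
  have "qform X x = qform (Ric X) x" using assms(2) by simp
  also have "\<dots> = cost X x (gain X *v x)" by (rule riccati_eq_cost_gain[OF assms(1)])
  finally show ?thesis by (simp only: cost_feedback)
qed

text \<open>Along the closed loop of a fixed point \<open>X\<close>, the stage costs telescope:
  their partial sums plus \<open>x\<^sub>T\<^sup>T X x\<^sub>T\<close> stay equal to \<open>x\<^sup>T X x\<close>.\<close>

lemma fixpoint_stage_cost_tendsto_zero:
  assumes X: "psd X" "Ric X = X"
  defines "Ac \<equiv> A + B ** gain X"
  shows "(\<lambda>t. qform Q (orbit Ac t x) + qform R (gain X *v orbit Ac t x)) \<longlonglongrightarrow> 0"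
proof -
  define l where "l t = qform Q (orbit Ac t x) + qform R (gain X *v orbit Ac t x)" for t
  have telescope: "(\<Sum>t<T. l t) + qform X (orbit Ac T x) = qform X x" for T
  proof (induct T)
    case (Suc T)
    then show ?case
      using fixpoint_qform_closed_loop[OF X, of "orbit Ac T x"] by (simp add: l_def Ac_def orbit_Suc)
  qed simp
  have "(\<Sum>t<T. l t) \<le> qform X x" for T
    using telescope[of T] psd_qform_nonneg[OF X(1), of "orbit Ac T x"] by linarith
  moreover have "0 \<le> l t" for t
    using psd_qform_nonneg[OF Q_psd] psd_qform_nonneg[OF pd_imp_psd[OF R_pd]] by (simp add: l_def)
  ultimately have "summable l" by (intro summableI_nonneg_bounded)
  then show ?thesis unfolding l_def[symmetric] by (rule summable_LIMSEQ_zero)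
qed

lemma fixpoint_stabilizing:
  assumes X: "psd X" "Ric X = X"
    and det: "schur_stable (A + L ** C)" and QC: "Q = transpose C ** C"
  shows "(\<lambda>t. orbit (A + B ** gain X) t x) \<longlonglongrightarrow> 0"
proof -
  define y where "y t = orbit (A + B ** gain X) t x" for t
  define l where "l t = qform Q (y t) + qform R (gain X *v y t)" for t
  have l: "l \<longlonglongrightarrow> 0"
    unfolding l_def y_def by (rule fixpoint_stage_cost_tendsto_zero[OF X])
  obtain r where r: "0 < r" "\<And>u. r * (norm u)\<^sup>2 \<le> qform R u" using pd_coercive[OF R_pd] by blast
  have "(norm (C *v y t))\<^sup>2 \<le> l t" for t
    using psd_qform_nonneg[OF pd_imp_psd[OF R_pd], of "gain X *v y t"]
    by (simp add: l_def QC qform_transpose_mult_self)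
  then have Cy: "(\<lambda>t. C *v y t) \<longlonglongrightarrow> 0" using l by (rule tendsto_zero_if_norm_square_le)
  have "(norm (gain X *v y t))\<^sup>2 \<le> l t / r" for t
    using r(1) r(2)[of "gain X *v y t"] psd_qform_nonneg[OF Q_psd, of "y t"]
    by (simp add: l_def le_divide_eq mult.commute)
  then have Ky: "(\<lambda>t. gain X *v y t) \<longlonglongrightarrow> 0"
    using tendsto_divide_zero[OF l] by (rule tendsto_zero_if_norm_square_le)
  define w where "w t = B *v (gain X *v y t) - L *v (C *v y t)" for t
  have "w \<longlonglongrightarrow> B *v 0 - L *v 0"
    unfolding w_def[abs_def]
    by (intro tendsto_diff bounded_linear.tendsto[OF matrix_vector_mul_bounded_linear] Ky Cy)
  then have w: "w \<longlonglongrightarrow> 0" by simp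
  have "y (Suc t) = (A + L ** C) *v y t + w t" for t
    by (simp add: y_def w_def orbit_Suc matrix_vector_mult_add_rdistrib matrix_vector_mul_assoc[symmetric])
  then have "y \<longlonglongrightarrow> 0"
    by (rule stable_perturbed_tendsto_zero[OF schur_stable_orbit_tendsto_zero[OF det] _ w])
  then show ?thesis unfolding y_def .
qed

lemma psd_fixpoint_unique:
  assumes lim: "value_iter \<longlonglongrightarrow> X"
    and det: "schur_stable (A + L ** C)" and QC: "Q = transpose C ** C"
    and Y: "psd Y" "Ric Y = Y"
  shows "Y = X"
proof -
  have X: "psd X" "Ric X = X" using limit_psd_above[OF lim] limit_riccati_fixpoint[OF lim] by auto
  define Ac where "Ac = A + B ** gain X"
  define d where "d x = qform Y x - qform X x" for x
  have "qform X x \<le> qform Y x" for x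
  proof (rule LIMSEQ_le_const2[OF tendsto_qform[OF lim tendsto_const]])
    show "\<exists>N. \<forall>k\<ge>N. qform (value_iter k) x \<le> qform Y x"
      using value_iter_le_fixpoint[OF Y] by (auto simp: loewner_le_def)
  qed
  then have d_nonneg: "0 \<le> d x" for x by (simp add: d_def)
  have d_step: "d x \<le> d (Ac *v x)" for x
  proof -
    have "qform Y x = qform (Ric Y) x" using Y(2) by simp
    also have "\<dots> \<le> cost Y x (gain X *v x)" by (rule riccati_le_cost[OF Y(1)])
    finally show ?thesis
      using fixpoint_qform_closed_loop[OF X, of x] unfolding d_def Ac_def cost_feedback by linarith
  qed
  have d_orbit: "d x \<le> d (orbit Ac t x)" for t x
  proof (induct t arbitrary: x)
    case (Suc t)
    then show ?case using order_trans[OF d_step[of x] Suc[of "Ac *v x"]] by (simp add: orbit_Suc_right)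
  qed simp
  have d_lim: "(\<lambda>t. d (orbit Ac t x)) \<longlonglongrightarrow> qform Y 0 - qform X 0" for x
    unfolding d_def Ac_def
    by (intro tendsto_diff tendsto_qform tendsto_const fixpoint_stabilizing[OF X det QC])
  have d_nonpos: "d x \<le> 0" for x
  proof (rule LIMSEQ_le_const)
    show "(\<lambda>t. d (orbit Ac t x)) \<longlonglongrightarrow> 0" using d_lim[of x] by simp
    show "\<exists>N. \<forall>t\<ge>N. d x \<le> d (orbit Ac t x)" using d_orbit by blast
  qed
  have "qform Y x = qform X x" for x using d_nonneg[of x] d_nonpos[of x] unfolding d_def by linarith
  then show ?thesis by (rule symmetric_eq_if_qform_eq[OF psd_symmetric[OF Y(1)] psd_symmetric[OF X(1)]])
qed

end

section \<open>The data-driven recursion\<close>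

definition stacked_dynamics :: "real^'n::finite^'n \<Rightarrow> real^'m::finite^'n \<Rightarrow> real^'n^('n + 'm)" where
  "stacked_dynamics A B = (\<chi> i j. case i of Inl a \<Rightarrow> A $ j $ a | Inr b \<Rightarrow> B $ j $ b)"

definition q_kernel :: "real^'n::finite^'n \<Rightarrow> real^'m::finite^'n \<Rightarrow> real^'n^'n \<Rightarrow> real^'m^'m
    \<Rightarrow> real^'n^'n \<Rightarrow> real^('n + 'm)^('n + 'm)" where
  "q_kernel A B Q R X = blockmat (Q + transpose A ** X ** A) (transpose A ** X ** B)
                                 (transpose B ** X ** A) (R + transpose B ** X ** B)"

definition schur_complement :: "real^('n::finite + 'm::finite)^('n + 'm) \<Rightarrow> real^'n^'n" where
  "schur_complement P = blk11 P - blk12 P ** matrix_inv (blk22 P) ** transpose (blk12 P)"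

lemma sum_UNIV_Plus:
  "(\<Sum>l\<in>UNIV. g l) = (\<Sum>a\<in>UNIV. g (Inl a)) + (\<Sum>b\<in>UNIV. g (Inr b :: 'a::finite + 'b::finite))"
  using sum.Plus[of "UNIV :: 'a set" "UNIV :: 'b set" g] by (simp add: comp_def)

lemma transpose_stacked_dynamics_stackv:
  "transpose (stacked_dynamics A B) *v stackv x u = A *v x + B *v u"
  by (simp add: vec_eq_iff matrix_vector_mult_def transpose_def stacked_dynamics_def stackv_def
      sum_UNIV_Plus)

lemma outer_transpose_matrix_vector: "outer v (transpose M *v v) = outer v v ** (M::real^'b^'a)"
  by (simp add: vec_eq_iff outer_def matrix_vector_mult_def matrix_matrix_mult_def transpose_def
      sum_distrib_left mult_ac)

lemma cross_moment_eq:
  assumes dyn: "\<And>k. x (Suc k) = A *v x k + B *v u k"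
    and S: "S = c *\<^sub>R (\<Sum>k<N. outer (stackv (x k) (u k)) (stackv (x k) (u k)))"
    and H: "H = c *\<^sub>R (\<Sum>k<N. outer (stackv (x k) (u k)) (x (Suc k)))"
  shows "H = S ** stacked_dynamics A B"
proof -
  have "H = c *\<^sub>R (\<Sum>k<N. outer (stackv (x k) (u k)) (stackv (x k) (u k)) ** stacked_dynamics A B)"
    unfolding H dyn transpose_stacked_dynamics_stackv[symmetric] outer_transpose_matrix_vector ..
  also have "\<dots> = c *\<^sub>R ((\<Sum>k<N. outer (stackv (x k) (u k)) (stackv (x k) (u k))) ** stacked_dynamics A B)"
    by (simp only: matrix_sum_rdistrib)
  finally show ?thesis by (simp add: S scalar_matrix_assoc)
qed

lemma blockmat_blocks [simp]:
  "blk11 (blockmat M11 M12 M21 M22) = M11" "blk12 (blockmat M11 M12 M21 M22) = M12"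
  "blk22 (blockmat M11 M12 M21 M22) = M22"
  by (simp_all add: vec_eq_iff blk11_def blk12_def blk22_def blockmat_def)

lemma q_kernel_eq_blockmat_add:
  "blockmat Q 0 0 R + stacked_dynamics A B ** X ** transpose (stacked_dynamics A B) = q_kernel A B Q R X"
  by (simp add: vec_eq_iff q_kernel_def blockmat_def stacked_dynamics_def matrix_matrix_mult_def
      transpose_def split: sum.split)

lemma schur_complement_q_kernel:
  assumes "transpose X = X"
  shows "schur_complement (q_kernel A B Q R X) = riccati A B Q R X"
  using assms unfolding schur_complement_def q_kernel_def riccati_def
  by (simp add: matrix_transpose_mul matrix_mul_assoc algebra_simps)

lemma tendsto_blockmat:
  assumes "(f11 \<longlongrightarrow> M11) F" "(f12 \<longlongrightarrow> M12) F" "(f21 \<longlongrightarrow> M21) F" "(f22 \<longlongrightarrow> M22) F"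
  shows "((\<lambda>k. blockmat (f11 k) (f12 k) (f21 k) (f22 k)) \<longlongrightarrow> blockmat M11 M12 M21 M22) F"
proof (intro vec_tendstoI)
  fix i j
  show "((\<lambda>k. blockmat (f11 k) (f12 k) (f21 k) (f22 k) $ i $ j) \<longlongrightarrow> blockmat M11 M12 M21 M22 $ i $ j) F"
    by (cases i; cases j) (simp_all add: blockmat_def tendsto_vec_nth assms)
qed

lemma tendsto_q_kernel:
  assumes "(f \<longlongrightarrow> X) F"
  shows "((\<lambda>k. q_kernel A B Q R (f k)) \<longlongrightarrow> q_kernel A B Q R X) F"
  unfolding q_kernel_def by (intro tendsto_blockmat tendsto_add tendsto_const tendsto_matrix_mult assms)

lemma psd_transpose_mult_self: "psd (transpose C ** C)"
  by (simp add: psd_iff_qform matrix_transpose_mul qform_transpose_mult_self)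

lemma (in lqr) recursion_eq_q_kernel:
  assumes "\<And>k. P (Suc k) = blockmat Q 0 0 R + stacked_dynamics A B
      ** (if k = 0 then 0 else schur_complement (P k)) ** transpose (stacked_dynamics A B)"
  shows "P (Suc k) = q_kernel A B Q R (value_iter k)"
proof (induct k)
  case 0
  show ?case using assms[of 0] q_kernel_eq_blockmat_add[of Q R A B 0] by (simp add: value_iter_0)
next
  case (Suc k)
  then have "schur_complement (P (Suc k)) = value_iter (Suc k)"
    by (simp add: schur_complement_q_kernel psd_symmetric[OF value_iter_psd] value_iter_Suc)
  then show ?case using assms[of "Suc k"] q_kernel_eq_blockmat_add by simp
qed

theorem proposition7:
  fixes A :: "real^'n::finite^'n" and B :: "real^'m::finite^'n"
    and C :: "real^'n^'p::finite" and Q :: "real^'n^'n" and R :: "real^'m^'m"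
    and x :: "nat \<Rightarrow> real^'n" and u :: "nat \<Rightarrow> real^'m" and z :: "real^'n"
    and N :: nat
    and S :: "real^('n + 'm)^('n + 'm)" and H :: "real^'n^('n + 'm)"
    and P :: "nat \<Rightarrow> real^('n + 'm)^('n + 'm)"
  assumes stab: "stabilizable A B"
    and QC: "Q = transpose C ** C"
    and det: "detectable A C"
    and Rpd: "pd R"
    and x0: "x 0 = z"
    and dyn: "\<And>k. x (Suc k) = A *v x k + B *v u k"
    and N: "N \<ge> 1"
    and S_def: "S = (1 / real N) *\<^sub>R (\<Sum>k<N. outer (stackv (x k) (u k)) (stackv (x k) (u k)))"
    and H_def: "H = (1 / real N) *\<^sub>R (\<Sum>k<N. outer (stackv (x k) (u k)) (x (Suc k)))"
    and Spd: "pd S"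
    and P0: "P 0 = 0"
    and Psym: "\<And>k. transpose (P (Suc k)) = P (Suc k)"
    and Pstep: "\<And>k. S ** P (Suc k) ** S =
        S ** blockmat Q 0 0 R ** S
        + H ** (if k = 0 then 0
                else blk11 (P k) - blk12 (P k) ** matrix_inv (blk22 (P k)) ** transpose (blk12 (P k)))
           ** transpose H"
  shows "(\<exists>!X. psd X \<and>
            X = transpose A ** X ** A
                - transpose A ** X ** B ** matrix_inv (R + transpose B ** X ** B) ** transpose B ** X ** A
                + Q)
       \<and> (\<forall>X. psd X \<and>
            X = transpose A ** X ** A
                - transpose A ** X ** B ** matrix_inv (R + transpose B ** X ** B) ** transpose B ** X ** A
                + Q
          \<longrightarrow> P \<longlonglongrightarrow> blockmat (Q + transpose A ** X ** A) (transpose A ** X ** B)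
                                   (transpose B ** X ** A) (R + transpose B ** X ** B))"
proof -
  interpret lqr A B Q R
    using psd_transpose_mult_self[of C] Rpd by unfold_locales (simp_all add: QC)
  obtain L where det': "schur_stable (A + L ** C)" using det unfolding detectable_def by blast
  obtain X where lim: "value_iter \<longlonglongrightarrow> X" using value_iter_converges[OF stab] by blast
  have sol: "psd Y \<and> Y = riccati A B Q R Y \<longleftrightarrow> Y = X" for Y
    using limit_psd_above(1)[OF lim] limit_riccati_fixpoint[OF lim] psd_fixpoint_unique[OF lim det' QC]
    by metis
  \<comment> \<open>As \<open>S\<close> is invertible, \<open>Pstep\<close> alone determines each \<open>P (Suc k)\<close>.\<close>
  have "P (Suc k) = blockmat Q 0 0 R + stacked_dynamics A B
      ** (if k = 0 then 0 else schur_complement (P k)) ** transpose (stacked_dynamics A B)" for k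
    unfolding schur_complement_def
    by (rule sandwich_cancel_congruence[OF Spd cross_moment_eq[OF dyn S_def H_def] Pstep])
  then have "P (Suc k) = q_kernel A B Q R (value_iter k)" for k by (rule recursion_eq_q_kernel)
  then have "(\<lambda>k. P (Suc k)) \<longlonglongrightarrow> q_kernel A B Q R X" using tendsto_q_kernel[OF lim] by simp
  then have "P \<longlonglongrightarrow> q_kernel A B Q R X" by (rule LIMSEQ_imp_Suc)
  then show ?thesis
    unfolding riccati_def[symmetric] q_kernel_def[symmetric] sol by simp
qed

end
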